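(* Let $k$ be a positive integer such that $k+1$ is an odd prime. For every $\mathbf v\in N_k$ there exist $s,r\in\mathbb{Z}_{k+1}^\times$ such that every coordinate of $s\mathbf v+r(1,2,\ldots,k)\in\mathbb{Z}_{k+1}^k$ lies in $\{1,2,\ldots,k-1\}$ (as residues modulo $k+1$).
   Context: $\mathbb{Z}_{k+1}$ is the integers modulo $k+1$ and $\mathbb{Z}_{k+1}^\times$ its group of units. $N_k:=\{\mathbf v\in\mathbb{Z}_{k+1}^k:\ \mathbf v\neq\mathbf 0 \text{ and } \mathbf v \text{ has at least one zero coordinate}\}$. *)

theory Defs
  imports "HOL-Computational_Algebra.Primes"
begin

text \<open>Vectors in (Z_{k+1})^k are represented as functions v :: nat \<Rightarrow> int whose
  coordinates v 1, ..., v k are residues in {0..k} (values outside 1..k are irrelevant).\<close>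

definition vecs :: "nat \<Rightarrow> (nat \<Rightarrow> int) set" where
  "vecs k = {v. \<forall>i\<in>{1..k}. v i \<in> {0..int k}}"

definition N :: "nat \<Rightarrow> (nat \<Rightarrow> int) set" where
  "N k = {v \<in> vecs k. (\<exists>i\<in>{1..k}. v i \<noteq> 0) \<and> (\<exists>i\<in>{1..k}. v i = 0)}"

definition units_mod :: "nat \<Rightarrow> int set" where
  "units_mod k = {s \<in> {0..int k}. coprime s (int k + 1)}"

end

theory Submission
  imports Defs "HOL-Number_Theory.Number_Theory" "HOL-Computational_Algebra.Polynomial"
begin

(* Write p = k + 1 and w_c = v - c (1, ..., k) mod p.  If some w_c with c <> 0 has no zero
   coordinate but repeats a value, it misses some y in {1..k}; then s = -1/y and r = -s c give
   s v + r (1, ..., k) = s w_c, whose coordinates avoid both 0 and s y = -1.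
   Otherwise every zero-free w_c is a permutation of {1..k}, with coordinate product k!.
   Summing Q(x) = prod_i (v_i - i x), of degree k = p - 1, over Z_p and using that
   sum_c c^j is 0 mod p for j < p - 1 and -1 for j = p - 1 yields
   #{c. w_c zero-free} * k! = -(-1)^k k! = -k!, so exactly one w_c has a zero coordinate.
   But both c = 0 (v has a zero coordinate) and c = v_j / j with v_j <> 0 give one. *)

lemma prime_dvd_power_sum:
  fixes p j :: nat
  assumes p: "prime p" and j: "j < p - 1"
  shows "p dvd (\<Sum>c<p. c ^ j)"
proof (cases "j = 0")
  case True
  then show ?thesis by simp
next
  case False
  let ?S = "\<Sum>c<p. c ^ j"
  obtain g where "residue_primroot p g"
    using prime_primitive_root_exists[of p] p prime_gt_1_nat by blast
  then have g_coprime: "coprime g p" and g_ord: "ord p g = p - 1"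
    using p by (auto simp: residue_primroot_def totient_prime coprime_commute)
  have inj: "inj_on (\<lambda>c. g * c mod p) {..<p}"
  proof (rule inj_onI)
    fix x y assume "x \<in> {..<p}" "y \<in> {..<p}" "g * x mod p = g * y mod p"
    then show "x = y"
      using cong_mult_lcancel_nat[OF g_coprime] by (auto simp: cong_def)
  qed
  have "(\<lambda>c. g * c mod p) ` {..<p} = {..<p}"
    using p prime_gt_0_nat by (intro endo_inj_surj[OF finite_lessThan _ inj]) auto
  then have "?S = (\<Sum>c<p. (g * c mod p) ^ j)"
    using sum.reindex[OF inj, of "\<lambda>c. c ^ j"] by simp
  also have "[\<dots> = (\<Sum>c<p. (g * c) ^ j)] (mod p)"
    by (intro cong_sum cong_pow) (simp add: cong_def)
  also have "(\<Sum>c<p. (g * c) ^ j) = g ^ j * ?S"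
    by (simp add: power_mult_distrib sum_distrib_left)
  finally have "[g ^ j * ?S = 1 * ?S] (mod p)"
    by (simp add: cong_sym)
  moreover have "\<not> [g ^ j = 1] (mod p)"
    using ord_minimal[of j p g] j False g_ord by auto
  ultimately have "\<not> coprime ?S p"
    using cong_mult_rcancel_nat by blast
  then show ?thesis
    using p prime_imp_coprime coprime_commute by blast
qed

lemma power_sum_Fermat_cong:
  fixes p :: nat
  assumes p: "prime p"
  shows "[(\<Sum>c<p. c ^ (p - 1)) = p - 1] (mod p)"
proof -
  have "[(\<Sum>c<p. c ^ (p - 1)) = (\<Sum>c<p. if c = 0 then 0 else 1)] (mod p)"
  proof (rule cong_sum)
    fix c assume "c \<in> {..<p}"
    then have "c = 0 \<or> \<not> p dvd c"
      by (auto dest: dvd_imp_le)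
    then show "[c ^ (p - 1) = (if c = 0 then 0 else 1)] (mod p)"
      using fermat_theorem[OF p, of c] prime_gt_1_nat[OF p] by (auto simp: zero_power)
  qed
  also have "(\<Sum>c<p. if c = 0 then 0 else 1::nat) = p - 1"
  proof -
    obtain n where p_Suc: "p = Suc n"
      using prime_gt_0_nat[OF p] gr0_conv_Suc by blast
    show ?thesis
      unfolding p_Suc sum.lessThan_Suc_shift by simp
  qed
  finally show ?thesis .
qed

lemma sum_poly_residues_cong:
  fixes Q :: "int poly" and p :: nat
  assumes p: "prime p" and deg: "degree Q \<le> p - 1"
  shows "[(\<Sum>c<p. poly Q (int c)) = - coeff Q (p - 1)] (mod int p)"
proof -
  have "poly Q x = (\<Sum>i\<le>p - 1. coeff Q i * x ^ i)" for x
    unfolding poly_altdef using deg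
    by (intro sum.mono_neutral_left) (auto intro: le_degree)
  then have "(\<Sum>c<p. poly Q (int c)) = (\<Sum>c<p. \<Sum>i\<le>p - 1. coeff Q i * int c ^ i)"
    by simp
  also have "\<dots> = (\<Sum>i\<le>p - 1. coeff Q i * int (\<Sum>c<p. c ^ i))"
    by (subst sum.swap) (simp add: sum_distrib_left)
  also have "[\<dots> = (\<Sum>i\<le>p - 1. if i = p - 1 then - coeff Q i else 0)] (mod int p)"
  proof (rule cong_sum)
    fix i assume "i \<in> {..p - 1}"
    then consider "i = p - 1" | "i < p - 1"
      by fastforce
    then show "[coeff Q i * int (\<Sum>c<p. c ^ i) = (if i = p - 1 then - coeff Q i else 0)] (mod int p)"
    proof cases
      case 1
      have "[int (\<Sum>c<p. c ^ (p - 1)) = int (p - 1)] (mod int p)"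
        using power_sum_Fermat_cong[OF p] by (simp only: cong_int_iff)
      also have "int (p - 1) = int p - 1"
        using prime_gt_0_nat[OF p] by simp
      also have "[int p - 1 = - 1] (mod int p)"
        by (simp add: cong_def)
      finally have "[coeff Q i * int (\<Sum>c<p. c ^ i) = coeff Q i * - 1] (mod int p)"
        using 1 by (intro cong_scalar_left) simp
      with 1 show ?thesis
        by simp
    next
      case 2
      have "int p dvd int (\<Sum>c<p. c ^ i)"
        using prime_dvd_power_sum[OF p 2] by (simp only: int_dvd_int_iff)
      then show ?thesis
        using 2 by (simp add: cong_0_iff)
    qed
  qed
  also have "(\<Sum>i\<le>p - 1. if i = p - 1 then - coeff Q i else 0) = - coeff Q (p - 1)"
    by simp
  finally show ?thesis .
qed

lemma prime_int_plus_one: "prime (k + 1) \<Longrightarrow> prime (int k + 1)"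
  using prime_nat_int_transfer[of "k + 1"] by (simp add: add.commute)

lemma prime_plus_one_not_dvd_fact:
  assumes "prime (k + 1)"
  shows "\<not> int k + 1 dvd fact k"
proof -
  have "\<not> (k + 1) dvd fact k"
    using prime_dvd_fact_iff[OF assms, of k] by simp
  moreover have "int (k + 1) dvd int (fact k) \<longleftrightarrow> k + 1 dvd fact k"
    by (rule int_dvd_int_iff)
  ultimately show ?thesis
    by (simp add: add.commute)
qed

lemma mod_mem_units_mod:
  assumes p: "prime (k + 1)" and x: "\<not> int k + 1 dvd x"
  shows "x mod (int k + 1) \<in> units_mod k"
proof -
  have "coprime (int k + 1) x"
    using prime_imp_coprime[OF prime_int_plus_one[OF p] x] .
  then have "coprime (x mod (int k + 1)) (int k + 1)"
    by (simp add: coprime_commute)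
  moreover have "x mod (int k + 1) < int k + 1"
    by (rule pos_mod_bound) simp
  ultimately show ?thesis
    by (simp add: units_mod_def)
qed

lemma coprime_of_cong_mult_eq_1:
  fixes y t m :: int
  assumes "[y * t = 1] (mod m)"
  shows "coprime t m"
proof -
  have "coprime (y * t) m"
    using cong_imp_coprime[OF cong_sym[OF assms]] by simp
  then show ?thesis
    by simp
qed

lemma minus_mult_inverse_mod_mem:
  assumes p: "prime (k + 1)" and t: "[y * t = 1] (mod int k + 1)"
    and w: "w \<in> {1..int k}" and y: "y \<in> {1..int k}" and "w \<noteq> y"
  shows "(- t * w) mod (int k + 1) \<in> {1..int k - 1}"
proof -
  define P where "P = int k + 1"
  have P: "prime P"
    unfolding P_def using prime_int_plus_one[OF p] .
  have t_coprime: "coprime t P"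
    using coprime_of_cong_mult_eq_1[OF t] by (simp add: P_def)
  then have t_not_dvd: "\<not> P dvd t"
    using P by (metis coprime_absorb_right not_prime_unit)
  have "(- t * w) mod P \<noteq> 0"
  proof
    assume "(- t * w) mod P = 0"
    then have "P dvd - t * w"
      by (rule mod_0_imp_dvd)
    then have "P dvd t * w"
      by simp
    then have "P dvd t \<or> P dvd w"
      using P prime_dvd_mult_iff by blast
    then show False
      using t_not_dvd zdvd_not_zless[of w P] w by (auto simp: P_def)
  qed
  moreover have "(- t * w) mod P \<noteq> P - 1"
  proof
    assume "(- t * w) mod P = P - 1"
    then have "[- (t * w) = - 1] (mod P)"
      by (simp add: cong_def zmod_minus1 P_def)
    then have "[t * w = 1] (mod P)"
      by (simp only: cong_minus_minus_iff)
    moreover have "[t * y = 1] (mod P)"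
      using t by (simp add: P_def mult.commute)
    ultimately have "[t * w = t * y] (mod P)"
      using cong_sym cong_trans by blast
    then have "[w = y] (mod P)"
      using cong_mult_lcancel[OF t_coprime] by blast
    then show False
      using w y \<open>w \<noteq> y\<close> cong_less_imp_eq_int[of w P y] by (auto simp: P_def)
  qed
  moreover have "0 \<le> (- t * w) mod P" "(- t * w) mod P < P"
    using P prime_gt_0_int by auto
  ultimately show ?thesis
    unfolding P_def atLeastAtMost_iff by linarith
qed

definition twist :: "nat \<Rightarrow> (nat \<Rightarrow> int) \<Rightarrow> nat \<Rightarrow> nat \<Rightarrow> int" where
  "twist k v c i = (v i - int c * int i) mod (int k + 1)"

definition zero_free_twists :: "nat \<Rightarrow> (nat \<Rightarrow> int) \<Rightarrow> nat set" where
  "zero_free_twists k v = {c. c \<le> k \<and> 0 \<notin> twist k v c ` {1..k}}"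

definition twist_poly :: "nat \<Rightarrow> (nat \<Rightarrow> int) \<Rightarrow> int poly" where
  "twist_poly k v = (\<Prod>i\<in>{1..k}. [:v i, - int i:])"

lemma twist_nonneg: "0 \<le> twist k v c i"
  by (simp add: twist_def)

lemma twist_less: "twist k v c i < int k + 1"
  unfolding twist_def by (rule pos_mod_bound) simp

lemma twist_image_subset:
  assumes "0 \<notin> twist k v c ` {1..k}"
  shows "twist k v c ` {1..k} \<subseteq> {1..int k}"
proof
  fix x assume "x \<in> twist k v c ` {1..k}"
  then obtain i where "i \<in> {1..k}" "x = twist k v c i"
    by blast
  then show "x \<in> {1..int k}"
    using assms twist_nonneg[of k v c i] twist_less[of k v c i] by force
qed

lemma prod_twist_eq_fact:
  assumes zero_free: "0 \<notin> twist k v c ` {1..k}" and inj: "inj_on (twist k v c) {1..k}"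
  shows "(\<Prod>i\<in>{1..k}. twist k v c i) = fact k"
proof -
  have "card (twist k v c ` {1..k}) = card {1..int k}"
    using card_image[OF inj] by simp
  then have image: "twist k v c ` {1..k} = {1..int k}"
    using twist_image_subset[OF zero_free] by (intro card_subset_eq) auto
  have "(\<Prod>i\<in>{1..k}. twist k v c i) = \<Prod>{1..int k}"
    using prod.reindex[OF inj, of id] image by simp
  also have "\<dots> = \<Prod>(int ` {1..k})"
    by (simp add: image_int_atLeastAtMost)
  also have "\<dots> = fact k"
    by (simp add: fact_prod prod.reindex)
  finally show ?thesis .
qed

lemma poly_twist_poly_cong:
  "[poly (twist_poly k v) (int c) = (\<Prod>i\<in>{1..k}. twist k v c i)] (mod int k + 1)"
  unfolding twist_poly_def poly_prod twist_def
  by (intro cong_prod) (simp add: cong_def algebra_simps)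

lemma degree_twist_poly: "degree (twist_poly k v) = k"
  unfolding twist_poly_def by (subst degree_prod_eq_sum_degree) auto

lemma coeff_twist_poly: "coeff (twist_poly k v) k = (- 1) ^ k * fact k"
proof -
  have "coeff (twist_poly k v) k = lead_coeff (twist_poly k v)"
    by (simp add: degree_twist_poly)
  also have "\<dots> = (\<Prod>i\<in>{1..k}. - int i)"
    unfolding twist_poly_def lead_coeff_prod by (intro prod.cong) auto
  also have "\<dots> = (- 1) ^ k * fact k"
    by (simp add: fact_prod prod_uminus of_nat_prod)
  finally show ?thesis .
qed

lemma card_zero_free_twists_cong:
  assumes p: "prime (k + 1)" and "even k"
    and inj: "\<And>c. c \<in> zero_free_twists k v \<Longrightarrow> inj_on (twist k v c) {1..k}"
  shows "[int (card (zero_free_twists k v)) * fact k = - fact k] (mod int k + 1)"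
proof -
  define G where "G = zero_free_twists k v"
  have "{..<k + 1} \<inter> G = G"
    by (auto simp: G_def zero_free_twists_def)
  then have "int (card G) * fact k = (\<Sum>c\<in>{..<k + 1} \<inter> G. fact k)"
    by simp
  also have "\<dots> = (\<Sum>c<k + 1. if c \<in> G then fact k else 0)"
    by (simp only: sum.inter_restrict finite_lessThan)
  also have "[(\<Sum>c<k + 1. if c \<in> G then fact k else 0) = (\<Sum>c<k + 1. poly (twist_poly k v) (int c))]
      (mod int k + 1)"
  proof (rule cong_sum)
    fix c assume "c \<in> {..<k + 1}"
    then have "(\<Prod>i\<in>{1..k}. twist k v c i) = (if c \<in> G then fact k else 0)"
      using prod_twist_eq_fact[OF _ inj] by (auto simp: G_def zero_free_twists_def)
    then show "[(if c \<in> G then fact k else 0) = poly (twist_poly k v) (int c)] (mod int k + 1)"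
      using poly_twist_poly_cong[of k v c] by (simp add: cong_sym_eq)
  qed
  also have "[(\<Sum>c<k + 1. poly (twist_poly k v) (int c)) = - coeff (twist_poly k v) k]
      (mod int k + 1)"
    using sum_poly_residues_cong[OF p, of "twist_poly k v"]
    by (simp only: degree_twist_poly of_nat_add of_nat_1 add_diff_cancel_right' order_refl)
  also have "- coeff (twist_poly k v) k = - fact k"
    using \<open>even k\<close> by (simp add: coeff_twist_poly)
  finally show ?thesis
    by (simp only: G_def)
qed

lemma card_zero_free_twists:
  assumes p: "prime (k + 1)" and "even k"
    and inj: "\<And>c. c \<in> zero_free_twists k v \<Longrightarrow> inj_on (twist k v c) {1..k}"
  shows "card (zero_free_twists k v) = k"
proof -
  define G where "G = zero_free_twists k v"
  have "int k + 1 dvd (int (card G) + 1) * fact k"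
    using card_zero_free_twists_cong[OF assms]
    by (simp add: G_def cong_iff_dvd_diff algebra_simps)
  then have dvd: "int k + 1 dvd int (card G) + 1"
    using prime_plus_one_not_dvd_fact[OF p] prime_int_plus_one[OF p] prime_dvd_mult_iff by blast
  then have "card G \<ge> k"
    using zdvd_imp_le by fastforce
  moreover have "card G \<noteq> k + 1"
  proof
    assume "card G = k + 1"
    with dvd have "int k + 1 dvd 1"
      by (metis add.assoc dvd_add_right_iff dvd_refl of_nat_add of_nat_1 one_add_one)
    then show False
      using p by simp
  qed
  moreover have "card G \<le> k + 1"
    using card_mono[of "{..k}" G] by (auto simp: G_def zero_free_twists_def)
  ultimately show ?thesis
    unfolding G_def by linarith
qed

lemma units_witness_of_missed_value:
  assumes p: "prime (k + 1)" and c: "c \<in> {1..k}"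
    and zero_free: "0 \<notin> twist k v c ` {1..k}"
    and y: "y \<in> {1..int k}" "y \<notin> twist k v c ` {1..k}"
  shows "\<exists>s\<in>units_mod k. \<exists>r\<in>units_mod k.
           \<forall>i\<in>{1..k}. (s * v i + r * int i) mod (int k + 1) \<in> {1..int k - 1}"
proof -
  define P where "P = int k + 1"
  have P: "prime P"
    unfolding P_def using prime_int_plus_one[OF p] .
  have "coprime y P"
    using prime_imp_coprime[OF P] zdvd_not_zless[of y P] y by (auto simp: P_def coprime_commute)
  then obtain t where t: "[y * t = 1] (mod P)"
    using cong_solve_coprime_int by blast
  then have "\<not> P dvd t"
    using P coprime_of_cong_mult_eq_1 by (metis coprime_absorb_right not_prime_unit)
  then have "\<not> P dvd - t" "\<not> P dvd int c * t"
    using P c zdvd_not_zless[of "int c" P] by (auto simp: P_def prime_dvd_mult_iff)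
  then have "(- t) mod P \<in> units_mod k" "(int c * t) mod P \<in> units_mod k"
    using mod_mem_units_mod[OF p] by (simp_all add: P_def)
  moreover have "((- t) mod P * v i + (int c * t) mod P * int i) mod P \<in> {1..int k - 1}"
    if i: "i \<in> {1..k}" for i
  proof -
    have "[(- t) mod P * v i + (int c * t) mod P * int i = (- t) * v i + (int c * t) * int i] (mod P)"
      by (intro cong_add cong_mult) (simp_all add: cong_def)
    also have "(- t) * v i + (int c * t) * int i = - t * (v i - int c * int i)"
      by (simp add: algebra_simps)
    also have "[- t * (v i - int c * int i) = - t * twist k v c i] (mod P)"
      unfolding twist_def P_def by (intro cong_mult) (simp_all add: cong_def)
    finally have "((- t) mod P * v i + (int c * t) mod P * int i) mod P = (- t * twist k v c i) mod P"
      by (simp add: cong_def)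
    moreover have "twist k v c i \<in> {1..int k}"
      using twist_image_subset[OF zero_free] i by blast
    moreover have "twist k v c i \<noteq> y"
      using i y(2) by blast
    ultimately show ?thesis
      using minus_mult_inverse_mod_mem[OF p _ _ y(1)] t by (simp add: P_def)
  qed
  ultimately show ?thesis
    unfolding P_def by blast
qed

lemma units_witness_of_not_inj_twist:
  assumes p: "prime (k + 1)" and c: "c \<in> {1..k}"
    and zero_free: "0 \<notin> twist k v c ` {1..k}"
    and not_inj: "\<not> inj_on (twist k v c) {1..k}"
  shows "\<exists>s\<in>units_mod k. \<exists>r\<in>units_mod k.
           \<forall>i\<in>{1..k}. (s * v i + r * int i) mod (int k + 1) \<in> {1..int k - 1}"
proof -
  have "card (twist k v c ` {1..k}) < card {1..int k}"
    using not_inj card_image_le[of "{1..k}" "twist k v c"]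
      inj_on_iff_eq_card[of "{1..k}" "twist k v c"]
    by simp
  then have "twist k v c ` {1..k} \<noteq> {1..int k}"
    by auto
  then obtain y where "y \<in> {1..int k}" "y \<notin> twist k v c ` {1..k}"
    using twist_image_subset[OF zero_free] by blast
  then show ?thesis
    by (rule units_witness_of_missed_value[OF p c zero_free])
qed

lemma ex_twist_eq_0:
  assumes p: "prime (k + 1)" and i: "i \<in> {1..k}" and v: "\<not> int k + 1 dvd v i"
  shows "\<exists>c\<in>{1..k}. twist k v c i = 0"
proof -
  define P where "P = int k + 1"
  have P: "prime P"
    unfolding P_def using prime_int_plus_one[OF p] .
  have "coprime (int i) P"
    using prime_imp_coprime[OF P] i zdvd_not_zless[of "int i" P]
    by (auto simp: P_def coprime_commute)
  then obtain u where u: "[int i * u = 1] (mod P)"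
    using cong_solve_coprime_int by blast
  define c where "c = nat ((v i * u) mod P)"
  have c_int: "int c = (v i * u) mod P"
    using P prime_gt_0_int by (simp add: c_def)
  have "[int c * int i = (v i * u) * int i] (mod P)"
    unfolding c_int by (intro cong_mult) (simp_all add: cong_def)
  also have "(v i * u) * int i = v i * (int i * u)"
    by (simp add: algebra_simps)
  also have "[v i * (int i * u) = v i * 1] (mod P)"
    using u by (rule cong_scalar_left)
  finally have "[v i = int c * int i] (mod P)"
    by (simp add: cong_sym_eq)
  then have twist_c: "twist k v c i = 0"
    by (simp add: twist_def P_def[symmetric] cong_iff_dvd_diff dvd_eq_mod_eq_0)
  have "c \<noteq> 0"
  proof
    assume "c = 0"
    with twist_c have "v i mod (int k + 1) = 0"
      by (simp add: twist_def)
    with v show False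
      by (simp add: mod_0_imp_dvd)
  qed
  moreover have "c \<le> k"
    using c_int pos_mod_bound[of P "v i * u"] P prime_gt_0_int by (simp add: P_def)
  ultimately show ?thesis
    using twist_c by auto
qed

lemma zero_free_twists_subset:
  assumes z: "z \<in> {1..k}" "int k + 1 dvd v z"
  shows "zero_free_twists k v \<subseteq> {1..k}"
proof
  fix c assume "c \<in> zero_free_twists k v"
  then have "c \<le> k" "0 \<notin> twist k v c ` {1..k}"
    by (simp_all add: zero_free_twists_def)
  moreover have "0 \<in> twist k v 0 ` {1..k}"
    using z(2) by (intro rev_image_eqI[OF z(1)]) (simp add: twist_def dvd_imp_mod_0)
  ultimately show "c \<in> {1..k}"
    by (cases "c = 0") auto
qed

lemma card_zero_free_twists_less:
  assumes p: "prime (k + 1)"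
    and z: "z \<in> {1..k}" "int k + 1 dvd v z"
    and j: "j \<in> {1..k}" "\<not> int k + 1 dvd v j"
  shows "card (zero_free_twists k v) < k"
proof -
  obtain c where c: "c \<in> {1..k}" "twist k v c j = 0"
    using ex_twist_eq_0[of k j v] p j by blast
  then have "0 \<in> twist k v c ` {1..k}"
    using j(1) by (metis imageI)
  then have "zero_free_twists k v \<subseteq> {1..k} - {c}"
    using zero_free_twists_subset[of z k v] z by (auto simp: zero_free_twists_def)
  then have "card (zero_free_twists k v) \<le> card ({1..k} - {c})"
    by (intro card_mono) auto
  also have "\<dots> < k"
    using c(1) by simp
  finally show ?thesis .
qed

lemma N_coordinates:
  assumes "v \<in> N k"
  obtains z j where "z \<in> {1..k}" "int k + 1 dvd v z" "j \<in> {1..k}" "\<not> int k + 1 dvd v j"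
proof -
  obtain z where "z \<in> {1..k}" "v z = 0"
    using assms by (auto simp: N_def)
  moreover obtain j where j: "j \<in> {1..k}" "v j \<noteq> 0"
    using assms by (auto simp: N_def)
  moreover have "v j \<in> {0..int k}"
    using assms j(1) by (auto simp: N_def vecs_def)
  ultimately show ?thesis
    using that zdvd_not_zless[of "v j" "int k + 1"] by auto
qed

theorem proposition4p1:
  fixes k :: nat and v :: "nat \<Rightarrow> int"
  assumes "k > 0" and "prime (k + 1)" and "odd (k + 1)"
    and "v \<in> N k"
  shows "\<exists>s\<in>units_mod k. \<exists>r\<in>units_mod k.
           \<forall>i\<in>{1..k}. (s * v i + r * int i) mod (int k + 1) \<in> {1..int k - 1}"
proof (rule ccontr)
  let ?witness = ?thesis
  assume no_witness: "\<not> ?witness"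
  obtain z j where z: "z \<in> {1..k}" "int k + 1 dvd v z" and j: "j \<in> {1..k}" "\<not> int k + 1 dvd v j"
    using N_coordinates[OF \<open>v \<in> N k\<close>] .
  have "inj_on (twist k v c) {1..k}" if c: "c \<in> zero_free_twists k v" for c
  proof (rule ccontr)
    assume "\<not> inj_on (twist k v c) {1..k}"
    with c zero_free_twists_subset[of z k v] z have ?witness
      by (intro units_witness_of_not_inj_twist[OF \<open>prime (k + 1)\<close>])
        (auto simp: zero_free_twists_def)
    with no_witness show False ..
  qed
  then have "card (zero_free_twists k v) = k"
    using card_zero_free_twists[OF \<open>prime (k + 1)\<close>] \<open>odd (k + 1)\<close> by simp
  moreover have "card (zero_free_twists k v) < k"
    using card_zero_free_twists_less[OF \<open>prime (k + 1)\<close> z j] .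
  ultimately show False
    by simp
qed

end
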